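(* Let $t\geq 1$ be real with $C(t)>0$. Then $\chi(G)\geq \lfloor t\rfloor+1$.
   Context: Let $G$ be a simple graph with vertex set $V=\{1,\dots,n\}$, edge set $E$, adjacency matrix $A$ and chromatic number $\chi(G)$. Let $e$ denote the all-ones vector, $\langle M,N\rangle=\operatorname{trace}(M^TN)$, and $Y\geq 0$ mean entrywise nonnegativity. For real $t\geq 1$, $P(t)$ is the semidefinite program $$\min \tfrac12\langle A,Y\rangle \ \text{ s.t. } \begin{pmatrix} Y & e\\ e^T & t\end{pmatrix}\succeq 0,\ \operatorname{diag}(Y)=e,\ Y\geq 0,$$ over symmetric $n\times n$ matrices $Y$, and $C(t)$ denotes its optimal value. *)

theory Defs
  imports Complex_Main
begin

text \<open>Graphs on vertex set {1..n} given by an edge relation E; matrices are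
functions nat => nat => real, only entries indexed in the relevant index set matter.\<close>

definition simple_graph :: "nat \<Rightarrow> (nat \<Rightarrow> nat \<Rightarrow> bool) \<Rightarrow> bool" where
  "simple_graph n E \<longleftrightarrow> (\<forall>i\<in>{1..n}. \<forall>j\<in>{1..n}. E i j \<longleftrightarrow> E j i) \<and> (\<forall>i\<in>{1..n}. \<not> E i i)"

definition adj :: "(nat \<Rightarrow> nat \<Rightarrow> bool) \<Rightarrow> nat \<Rightarrow> nat \<Rightarrow> real" where
  "adj E i j = (if E i j then 1 else 0)"

definition chromatic_number :: "nat \<Rightarrow> (nat \<Rightarrow> nat \<Rightarrow> bool) \<Rightarrow> nat" where
  "chromatic_number n E = (LEAST k. \<exists>c :: nat \<Rightarrow> nat.
      (\<forall>i\<in>{1..n}. c i < k) \<and> (\<forall>i\<in>{1..n}. \<forall>j\<in>{1..n}. E i j \<longrightarrow> c i \<noteq> c j))"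

definition psd_on :: "nat set \<Rightarrow> (nat \<Rightarrow> nat \<Rightarrow> real) \<Rightarrow> bool" where
  "psd_on I M \<longleftrightarrow> (\<forall>i\<in>I. \<forall>j\<in>I. M i j = M j i) \<and>
     (\<forall>x :: nat \<Rightarrow> real. 0 \<le> (\<Sum>i\<in>I. \<Sum>j\<in>I. x i * M i j * x j))"

text \<open>The bordered matrix [[Y, e], [e^T, t]] indexed by {1..n+1}.\<close>
definition bordered :: "nat \<Rightarrow> (nat \<Rightarrow> nat \<Rightarrow> real) \<Rightarrow> real \<Rightarrow> nat \<Rightarrow> nat \<Rightarrow> real" where
  "bordered n Y t i j = (if i \<le> n \<and> j \<le> n then Y i j else if i \<le> n \<or> j \<le> n then 1 else t)"

definition sdp_feasible :: "nat \<Rightarrow> real \<Rightarrow> (nat \<Rightarrow> nat \<Rightarrow> real) \<Rightarrow> bool" where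
  "sdp_feasible n t Y \<longleftrightarrow>
     (\<forall>i\<in>{1..n}. \<forall>j\<in>{1..n}. Y i j = Y j i) \<and>
     psd_on {1..Suc n} (bordered n Y t) \<and>
     (\<forall>i\<in>{1..n}. Y i i = 1) \<and>
     (\<forall>i\<in>{1..n}. \<forall>j\<in>{1..n}. 0 \<le> Y i j)"

definition sdp_objective :: "nat \<Rightarrow> (nat \<Rightarrow> nat \<Rightarrow> bool) \<Rightarrow> (nat \<Rightarrow> nat \<Rightarrow> real) \<Rightarrow> real" where
  "sdp_objective n E Y = (1/2) * (\<Sum>i\<in>{1..n}. \<Sum>j\<in>{1..n}. adj E i j * Y i j)"

text \<open>Optimal value C(t) of P(t) (the minimum is attained: feasible set is compact and nonempty for t >= 1).\<close>
definition sdp_value :: "nat \<Rightarrow> (nat \<Rightarrow> nat \<Rightarrow> bool) \<Rightarrow> real \<Rightarrow> real" where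
  "sdp_value n E t = Inf {sdp_objective n E Y | Y. sdp_feasible n t Y}"

end

theory Submission
  imports Defs "HOL-Analysis.Analysis"
begin

text \<open>A proper colouring c with at most t colours yields the feasible point
Y = [c i = c j] of P(t) with objective value 0, so C(t) \<le> 0. Feasibility rests on
Cauchy-Schwarz: with m colours and S a the x-mass of colour class a, the quadratic form
of the bordered matrix at (x, s) equals \<Sum>a S a^2 + 2 s \<Sum>a S a + t s^2, and
m times it is at least (\<Sum>a S a + m s)^2 because t \<ge> m.\<close>

definition colouring_matrix :: "(nat \<Rightarrow> nat) \<Rightarrow> nat \<Rightarrow> nat \<Rightarrow> real" where
  "colouring_matrix c i j = (if c i = c j then 1 else 0)"

lemma bordered_quadratic_form:
  "(\<Sum>i\<in>{1..Suc n}. \<Sum>j\<in>{1..Suc n}. x i * bordered n Y t i j * x j)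
     = (\<Sum>i\<in>{1..n}. \<Sum>j\<in>{1..n}. x i * Y i j * x j)
       + 2 * x (Suc n) * (\<Sum>i\<in>{1..n}. x i) + t * (x (Suc n))\<^sup>2"
proof -
  have row: "(\<Sum>j\<in>{1..Suc n}. x i * bordered n Y t i j * x j)
      = (\<Sum>j\<in>{1..n}. x i * Y i j * x j) + x i * x (Suc n)" if "i \<in> {1..n}" for i
    using that by (simp add: sum.cl_ivl_Suc bordered_def)
  have last_row: "(\<Sum>j\<in>{1..Suc n}. x (Suc n) * bordered n Y t (Suc n) j * x j)
      = x (Suc n) * (\<Sum>i\<in>{1..n}. x i) + t * (x (Suc n))\<^sup>2"
    by (simp add: sum.cl_ivl_Suc bordered_def sum_distrib_left power2_eq_square)
  have "(\<Sum>i\<in>{1..Suc n}. \<Sum>j\<in>{1..Suc n}. x i * bordered n Y t i j * x j)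
      = (\<Sum>i\<in>{1..n}. \<Sum>j\<in>{1..Suc n}. x i * bordered n Y t i j * x j)
        + (x (Suc n) * (\<Sum>i\<in>{1..n}. x i) + t * (x (Suc n))\<^sup>2)"
    using last_row by (simp add: sum.cl_ivl_Suc)
  also have "(\<Sum>i\<in>{1..n}. \<Sum>j\<in>{1..Suc n}. x i * bordered n Y t i j * x j)
      = (\<Sum>i\<in>{1..n}. (\<Sum>j\<in>{1..n}. x i * Y i j * x j) + x i * x (Suc n))"
    using row by (rule sum.cong[OF refl])
  finally show ?thesis
    by (simp add: sum.distrib algebra_simps flip: sum_distrib_right)
qed

lemma colouring_quadratic_form:
  assumes "finite I"
  shows "(\<Sum>i\<in>I. \<Sum>j\<in>I. x i * colouring_matrix c i j * x j)
     = (\<Sum>a\<in>c ` I. (\<Sum>i\<in>{i\<in>I. c i = a}. x i)\<^sup>2)"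
proof -
  define S where "S a = (\<Sum>i\<in>{i\<in>I. c i = a}. x i)" for a
  have "(\<Sum>j\<in>I. x i * colouring_matrix c i j * x j) = x i * S (c i)" for i
  proof -
    have "(\<Sum>j\<in>I. x i * colouring_matrix c i j * x j)
        = (\<Sum>j\<in>I. x i * (if c j = c i then x j else 0))"
      by (intro sum.cong) (auto simp: colouring_matrix_def)
    then show ?thesis
      by (simp add: S_def sum_distrib_left sum.inter_filter[OF assms])
  qed
  then have "(\<Sum>i\<in>I. \<Sum>j\<in>I. x i * colouring_matrix c i j * x j) = (\<Sum>i\<in>I. x i * S (c i))"
    by simp
  also have "\<dots> = (\<Sum>a\<in>c ` I. \<Sum>i\<in>{i\<in>I. c i = a}. x i * S a)"
    using sum.image_gen[OF assms, of "\<lambda>i. x i * S (c i)" c] by simp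
  also have "\<dots> = (\<Sum>a\<in>c ` I. (S a)\<^sup>2)"
    by (simp add: S_def power2_eq_square sum_distrib_right)
  finally show ?thesis by (simp add: S_def)
qed

lemma quadratic_nonneg_of_Cauchy_Schwarz:
  fixes A T s t m :: real
  assumes CS: "T\<^sup>2 \<le> A * m" and "0 \<le> A" and "0 \<le> m" and "m \<le> t"
  shows "0 \<le> A + 2 * s * T + t * s\<^sup>2"
proof (cases "m = 0")
  case True
  then show ?thesis using assms by simp
next
  case False
  then have "m > 0" using \<open>0 \<le> m\<close> by simp
  have "(T + m * s)\<^sup>2 \<le> m * (A + 2 * s * T + t * s\<^sup>2)"
  proof -
    have "m * (m * s\<^sup>2) \<le> m * (t * s\<^sup>2)"
      using \<open>m > 0\<close> \<open>m \<le> t\<close> by (intro mult_left_mono mult_right_mono) auto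
    then show ?thesis using CS by (simp add: power2_eq_square algebra_simps)
  qed
  then show ?thesis
    using \<open>m > 0\<close> by (metis zero_le_power2 order_trans zero_le_mult_iff not_less)
qed

lemma colouring_matrix_bordered_psd:
  assumes "real (card (c ` {1..n})) \<le> t"
  shows "psd_on {1..Suc n} (bordered n (colouring_matrix c) t)"
  unfolding psd_on_def
proof (intro conjI allI ballI)
  fix x :: "nat \<Rightarrow> real"
  define S where "S a = (\<Sum>i\<in>{i\<in>{1..n}. c i = a}. x i)" for a
  have total_mass: "(\<Sum>i\<in>{1..n}. x i) = (\<Sum>a\<in>c ` {1..n}. S a)"
    unfolding S_def by (rule sum.image_gen) simp
  have "(\<Sum>a\<in>c ` {1..n}. S a)\<^sup>2 \<le> (\<Sum>a\<in>c ` {1..n}. (S a)\<^sup>2) * card (c ` {1..n})"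
    by (rule sum_squared_le_sum_of_squares)
  then show "0 \<le> (\<Sum>i\<in>{1..Suc n}. \<Sum>j\<in>{1..Suc n}. x i * bordered n (colouring_matrix c) t i j * x j)"
    unfolding bordered_quadratic_form colouring_quadratic_form[OF finite_atLeastAtMost]
      total_mass S_def[symmetric]
    using assms by (intro quadratic_nonneg_of_Cauchy_Schwarz) (auto intro: sum_nonneg)
qed (auto simp: bordered_def colouring_matrix_def)

lemma colouring_matrix_feasible:
  assumes "real (card (c ` {1..n})) \<le> t"
  shows "sdp_feasible n t (colouring_matrix c)"
  using colouring_matrix_bordered_psd[OF assms]
  by (simp add: sdp_feasible_def colouring_matrix_def)

lemma sdp_objective_proper_colouring:
  assumes "\<forall>i\<in>{1..n}. \<forall>j\<in>{1..n}. E i j \<longrightarrow> c i \<noteq> c j"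
  shows "sdp_objective n E (colouring_matrix c) = 0"
  using assms by (auto simp: sdp_objective_def adj_def colouring_matrix_def intro!: sum.neutral)

lemma sdp_objective_nonneg:
  assumes "sdp_feasible n t Y"
  shows "0 \<le> sdp_objective n E Y"
  using assms by (auto simp: sdp_feasible_def sdp_objective_def adj_def intro!: sum_nonneg)

lemma sdp_value_le_objective:
  assumes "sdp_feasible n t Y"
  shows "sdp_value n E t \<le> sdp_objective n E Y"
proof -
  have "bdd_below {sdp_objective n E Z | Z. sdp_feasible n t Z}"
    by (rule bdd_belowI[of _ 0]) (use sdp_objective_nonneg in blast)
  then show ?thesis
    unfolding sdp_value_def using assms by (auto intro: cInf_lower)
qed

lemma chromatic_number_colouring:
  assumes "simple_graph n E"
  obtains c :: "nat \<Rightarrow> nat" where "\<forall>i\<in>{1..n}. c i < chromatic_number n E"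
    and "\<forall>i\<in>{1..n}. \<forall>j\<in>{1..n}. E i j \<longrightarrow> c i \<noteq> c j"
proof -
  have "\<exists>c :: nat \<Rightarrow> nat. (\<forall>i\<in>{1..n}. c i < Suc n)
      \<and> (\<forall>i\<in>{1..n}. \<forall>j\<in>{1..n}. E i j \<longrightarrow> c i \<noteq> c j)"
    using assms by (intro exI[of _ id]) (auto simp: simple_graph_def)
  then have "\<exists>c :: nat \<Rightarrow> nat. (\<forall>i\<in>{1..n}. c i < chromatic_number n E)
      \<and> (\<forall>i\<in>{1..n}. \<forall>j\<in>{1..n}. E i j \<longrightarrow> c i \<noteq> c j)"
    unfolding chromatic_number_def by (rule LeastI)
  then show ?thesis using that by blast
qed

theorem mainTheorem4:
  fixes n :: nat and E :: "nat \<Rightarrow> nat \<Rightarrow> bool" and t :: real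
  assumes "simple_graph n E"
    and "t \<ge> 1"
    and "sdp_value n E t > 0"
  shows "real (chromatic_number n E) \<ge> of_int \<lfloor>t\<rfloor> + 1"
proof (rule ccontr)
  assume "\<not> ?thesis"
  then have "int (chromatic_number n E) \<le> \<lfloor>t\<rfloor>" by linarith
  then have k_le_t: "real (chromatic_number n E) \<le> t" by (simp add: le_floor_iff)
  obtain c where colours: "\<forall>i\<in>{1..n}. c i < chromatic_number n E"
    and proper: "\<forall>i\<in>{1..n}. \<forall>j\<in>{1..n}. E i j \<longrightarrow> c i \<noteq> c j"
    using chromatic_number_colouring[OF assms(1)] by blast
  have "card (c ` {1..n}) \<le> card {..<chromatic_number n E}"
    using colours by (intro card_mono) auto
  with k_le_t have "real (card (c ` {1..n})) \<le> t" by simp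
  then have "sdp_value n E t \<le> 0"
    using sdp_value_le_objective[OF colouring_matrix_feasible]
      sdp_objective_proper_colouring[OF proper]
    by metis
  with assms(3) show False by simp
qed

end
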